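(* Let $p_0>2$ be a rational number with continued fraction expansion $$p_0=\nu_1+\cfrac{1}{\nu_2+\cfrac{1}{\ddots+\cfrac{1}{\nu_\alpha}}},\qquad \alpha\ge1,\ \nu_1,\dots,\nu_\alpha\in\mathbb{Z}_{\ge1}.$$ Define $y_{-1}=0,\ y_0=1,\ z_{-1}=1,\ z_0=0$ and $y_j=y_{j-2}+\nu_jy_{j-1}$, $z_j=z_{j-2}+\nu_jz_{j-1}$ for $1\le j\le\alpha$. Let $\theta=\pi/p_0$, let $N$ be an even positive integer, $u\in\mathbb{C}$, $m\in\{0,1,\dots,N/2\}$, and let $\omega_1,\dots,\omega_m$ solve the Bethe ansatz equations $$-\Biggl(\frac{\sinh\frac{\theta}{2}\bigl(\omega_j+i(u+2)\bigr)\sinh\frac{\theta}{2}(\omega_j-iu)}{\sinh\frac{\theta}{2}\bigl(\omega_j-i(u+2)\bigr)\sinh\frac{\theta}{2}(\omega_j+iu)}\Biggr)^{N/2}=\frac{Q(\omega_j+2i)}{Q(\omega_j-2i)},\qquad j=1,\dots,m,$$ where $Q(v)=\prod_{k=1}^m\sinh\frac{\theta}{2}(v-\omega_k)$. For integers $n\ge0$ let $$T_{n-1}(v)=\sum_{j=1}^{n}\phi\bigl(v-i(u+n+2-2j)\bigr)\phi\bigl(v+i(u-n+2j)\bigr)\frac{Q(v+in)Q(v-in)}{Q\bigl(v+i(2j-n)\bigr)Q\bigl(v+i(2j-n-2)\bigr)},\quad \phi(v)=\Bigl(\frac{\sinh\frac{\theta}{2}v}{\sin\theta}\Bigr)^{N/2}.$$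 Then, as an identity of meromorphic functions of $v$, $$T_{y_\alpha+y_{\alpha-1}-1}(v)=T_{y_\alpha-y_{\alpha-1}-1}(v)+2(-1)^{mz_\alpha}\,T_{y_{\alpha-1}-1}(v+iy_\alpha).$$
   Context: $T_{n-1}(v)$ are the eigenvalues (dressed vacuum form) of the fusion hierarchy of quantum transfer matrices of the six-vertex model related to the XXZ chain with $\Delta=\cos(\pi/p_0)$; $\sinh$ is the hyperbolic sine. The numbers $y_j,z_j$ are the Takahashi–Suzuki data attached to $p_0$. *)

theory Defs
  imports "HOL-Analysis.Analysis"
begin

text \<open>Finite continued fraction: cfr nu i k = nu_i + 1/(nu_(i+1) + ... + 1/nu_(i+k)).
  So p0 = [nu_1; nu_2, ..., nu_alpha] is cfr nu 1 (alpha - 1).\<close>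
fun cfr :: "(nat \<Rightarrow> nat) \<Rightarrow> nat \<Rightarrow> nat \<Rightarrow> real" where
  "cfr nu i 0 = real (nu i)"
| "cfr nu i (Suc k) = real (nu i) + 1 / cfr nu (Suc i) k"

text \<open>Takahashi--Suzuki numbers, shifted by one: ts_y nu (j+1) = y_j, ts_z nu (j+1) = z_j
  (so ts_y nu 0 = y_(-1) = 0, ts_y nu 1 = y_0 = 1, ts_z nu 0 = z_(-1) = 1, ts_z nu 1 = z_0 = 0).\<close>
fun ts_y :: "(nat \<Rightarrow> nat) \<Rightarrow> nat \<Rightarrow> nat" where
  "ts_y nu 0 = 0"
| "ts_y nu (Suc 0) = 1"
| "ts_y nu (Suc (Suc j)) = ts_y nu j + nu (Suc j) * ts_y nu (Suc j)"

fun ts_z :: "(nat \<Rightarrow> nat) \<Rightarrow> nat \<Rightarrow> nat" where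
  "ts_z nu 0 = 1"
| "ts_z nu (Suc 0) = 0"
| "ts_z nu (Suc (Suc j)) = ts_z nu j + nu (Suc j) * ts_z nu (Suc j)"

definition Qfun :: "real \<Rightarrow> nat \<Rightarrow> (nat \<Rightarrow> complex) \<Rightarrow> complex \<Rightarrow> complex" where
  "Qfun \<theta> m \<omega> v = (\<Prod>k=1..m. sinh (complex_of_real (\<theta>/2) * (v - \<omega> k)))"

definition phi :: "real \<Rightarrow> nat \<Rightarrow> complex \<Rightarrow> complex" where
  "phi \<theta> N v = (sinh (complex_of_real (\<theta>/2) * v) / complex_of_real (sin \<theta>)) ^ (N div 2)"

text \<open>Tfun \<theta> N u m \<omega> n v is T_(n-1)(v) (dressed vacuum form); T_(-1) = 0.\<close>
definition Tfun :: "real \<Rightarrow> nat \<Rightarrow> complex \<Rightarrow> nat \<Rightarrow> (nat \<Rightarrow> complex) \<Rightarrow> nat \<Rightarrow> complex \<Rightarrow> complex" where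
  "Tfun \<theta> N u m \<omega> n v =
     (\<Sum>j=1..n.
        phi \<theta> N (v - \<i> * (u + of_nat n + 2 - 2 * of_nat j))
      * phi \<theta> N (v + \<i> * (u - of_nat n + 2 * of_nat j))
      * (Qfun \<theta> m \<omega> (v + \<i> * of_nat n) * Qfun \<theta> m \<omega> (v - \<i> * of_nat n))
      / (Qfun \<theta> m \<omega> (v + \<i> * (2 * of_nat j - of_nat n))
         * Qfun \<theta> m \<omega> (v + \<i> * (2 * of_nat j - of_nat n - 2))))"

end

theory Submission
  imports Defs
begin

(* Since p0 = y_alpha / z_alpha is the last convergent of its continued fraction, theta y_alpha =
   pi z_alpha, so sinh (theta/2 (x + 2 i y_alpha)) = (-1)^z_alpha sinh (theta/2 x).  Hence phi and Q
   are quasi-periodic with period 2 i y_alpha and the ratio phi phi / (Q Q) summed in T is periodic.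
   Write y_alpha = y_(alpha-1) + r.  The y_alpha + y_(alpha-1) summands of the left-hand side fall
   into a block of y_(alpha-1), a block of r and a block of y_(alpha-1) consecutive terms; the middle
   block gives T_(r-1)(v), and each outer block, after a shift by the period, gives
   T_(y_(alpha-1)-1)(v + i y_alpha).  The Q prefactors agree up to the sign (-1)^(m z_alpha). *)

lemma ts_y_ge_1:
  assumes "\<forall>j\<in>{1..n}. nu j \<ge> 1"
  shows "ts_y nu (Suc n) \<ge> 1"
  using assms
proof (induction n)
  case (Suc n)
  then have "1 \<le> nu (Suc n) * ts_y nu (Suc n)"
    by (simp add: Suc_le_eq)
  then show ?case
    by (simp add: trans_le_add2)
qed simp

lemma ts_y_le_ts_y_Suc:
  assumes "nu (Suc n) \<ge> 1"
  shows "ts_y nu (Suc n) \<le> ts_y nu (Suc (Suc n))"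
  using assms by (simp add: trans_le_add2)

lemma ts_y_ts_z_Suc_shift:
  "ts_y nu (Suc n) = nu 1 * ts_y (\<lambda>j. nu (Suc j)) n + ts_z (\<lambda>j. nu (Suc j)) n
   \<and> ts_z nu (Suc n) = ts_y (\<lambda>j. nu (Suc j)) n"
  by (induction nu n rule: ts_y.induct) (simp_all add: algebra_simps)

lemma cfr_Suc_shift: "cfr nu (Suc i) k = cfr (\<lambda>j. nu (Suc j)) i k"
  by (induction k arbitrary: i) auto

lemma cfr_eq_ts_y_div_ts_z:
  assumes "\<forall>j\<in>{1..Suc k}. nu j \<ge> 1"
  shows "cfr nu 1 k = real (ts_y nu (Suc (Suc k))) / real (ts_z nu (Suc (Suc k)))"
  using assms
proof (induction k arbitrary: nu)
  case (Suc k)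
  let ?s = "\<lambda>j. nu (Suc j)"
  let ?Y = "real (ts_y ?s (Suc (Suc k)))" and ?Z = "real (ts_z ?s (Suc (Suc k)))"
  have hyp: "\<forall>j\<in>{1..Suc k}. ?s j \<ge> 1"
    using Suc.prems by auto
  have "?Y \<noteq> 0"
    using ts_y_ge_1[OF hyp] by (simp del: ts_y.simps)
  moreover have "cfr nu 1 (Suc k) = real (nu 1) + 1 / (?Y / ?Z)"
    using Suc.IH[OF hyp] cfr_Suc_shift[of nu 1 k] by (simp add: numeral_2_eq_2)
  ultimately show ?case
    using ts_y_ts_z_Suc_shift[of nu "Suc (Suc k)"] by (simp add: field_simps del: ts_y.simps ts_z.simps)
qed simp

lemma sinh_add_of_nat_pi_i: "sinh (x + of_nat k * (pi * \<i>)) = (-1) ^ k * sinh (x :: complex)"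
proof -
  let ?c = "of_nat k * (of_real pi * \<i>) :: complex"
  have e: "exp ?c = (-1) ^ k"
    by (simp only: exp_of_nat_mult exp_pi_i)
  then have e': "exp (- ?c) = (-1) ^ k"
    by (simp add: exp_minus flip: power_inverse)
  have "sinh (x + ?c) = (exp x * exp ?c - exp (- x) * exp (- ?c)) / 2"
    unfolding sinh_field_def minus_add_distrib exp_add ..
  also have "\<dots> = (-1) ^ k * sinh x"
    unfolding e e' sinh_field_def by (simp add: right_diff_distrib)
  finally show ?thesis by simp
qed

lemma sinh_quasi_periodic:
  assumes "\<theta> * real p = pi * real z"
  shows "sinh (complex_of_real (\<theta>/2) * (x + 2 * \<i> * of_nat p))
       = (-1) ^ z * sinh (complex_of_real (\<theta>/2) * x)"
proof -
  have "complex_of_real (\<theta>/2) * (x + 2 * \<i> * of_nat p)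
      = complex_of_real (\<theta>/2) * x + of_nat z * (pi * \<i>)"
    using arg_cong[OF assms, of complex_of_real] by (simp add: field_simps)
  then show ?thesis
    by (simp only: sinh_add_of_nat_pi_i)
qed

lemma Qfun_quasi_periodic:
  assumes "\<theta> * real p = pi * real z"
  shows "Qfun \<theta> m \<omega> (x + 2 * \<i> * of_nat p) = (-1) ^ (m * z) * Qfun \<theta> m \<omega> x"
proof -
  have "Qfun \<theta> m \<omega> (x + 2 * \<i> * of_nat p)
      = (\<Prod>k=1..m. (-1) ^ z * sinh (complex_of_real (\<theta>/2) * (x - \<omega> k)))"
    unfolding Qfun_def using sinh_quasi_periodic[OF assms, of "x - \<omega> _"]
    by (intro prod.cong) (simp_all add: algebra_simps)
  then show ?thesis
    by (simp add: Qfun_def prod.distrib mult.commute[of m] power_mult)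
qed

lemma phi_quasi_periodic:
  assumes "\<theta> * real p = pi * real z"
  shows "phi \<theta> N (x + 2 * \<i> * of_nat p) = (-1) ^ (z * (N div 2)) * phi \<theta> N x"
  unfolding phi_def sinh_quasi_periodic[OF assms] power_mult
  by (metis power_mult_distrib times_divide_eq_right)

definition Tfun_summand ::
    "real \<Rightarrow> nat \<Rightarrow> complex \<Rightarrow> nat \<Rightarrow> (nat \<Rightarrow> complex) \<Rightarrow> complex \<Rightarrow> complex" where
  "Tfun_summand \<theta> N u m \<omega> w =
     phi \<theta> N (w - \<i> * (u + 1)) * phi \<theta> N (w + \<i> * (u + 1))
     / (Qfun \<theta> m \<omega> (w + \<i>) * Qfun \<theta> m \<omega> (w - \<i>))"

lemma Tfun_summand_periodic:
  assumes "\<theta> * real p = pi * real z"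
  shows "Tfun_summand \<theta> N u m \<omega> (w + 2 * \<i> * of_nat p) = Tfun_summand \<theta> N u m \<omega> w"
proof -
  have shift: "w + 2 * \<i> * of_nat p + c = (w + c) + 2 * \<i> * of_nat p" for c
    by simp
  show ?thesis
    unfolding Tfun_summand_def diff_conv_add_uminus shift
      phi_quasi_periodic[OF assms] Qfun_quasi_periodic[OF assms]
    by (simp add: mult_ac)
qed

lemma Tfun_eq_Qfun_mult_sum:
  "Tfun \<theta> N u m \<omega> n v = Qfun \<theta> m \<omega> (v + \<i> * of_nat n) * Qfun \<theta> m \<omega> (v - \<i> * of_nat n)
     * (\<Sum>j=1..n. Tfun_summand \<theta> N u m \<omega> (v + \<i> * of_int (2 * int j - int n - 1)))"
  unfolding Tfun_def sum_distrib_left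
proof (rule sum.cong)
  fix j
  let ?w = "v + \<i> * of_int (2 * int j - int n - 1)"
  have args: "v - \<i> * (u + of_nat n + 2 - 2 * of_nat j) = ?w - \<i> * (u + 1)"
    "v + \<i> * (u - of_nat n + 2 * of_nat j) = ?w + \<i> * (u + 1)"
    "v + \<i> * (2 * of_nat j - of_nat n) = ?w + \<i>"
    "v + \<i> * (2 * of_nat j - of_nat n - 2) = ?w - \<i>"
    by (simp_all add: algebra_simps)
  show "phi \<theta> N (v - \<i> * (u + of_nat n + 2 - 2 * of_nat j))
        * phi \<theta> N (v + \<i> * (u - of_nat n + 2 * of_nat j))
        * (Qfun \<theta> m \<omega> (v + \<i> * of_nat n) * Qfun \<theta> m \<omega> (v - \<i> * of_nat n))
        / (Qfun \<theta> m \<omega> (v + \<i> * (2 * of_nat j - of_nat n))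
           * Qfun \<theta> m \<omega> (v + \<i> * (2 * of_nat j - of_nat n - 2)))
      = Qfun \<theta> m \<omega> (v + \<i> * of_nat n) * Qfun \<theta> m \<omega> (v - \<i> * of_nat n)
        * Tfun_summand \<theta> N u m \<omega> ?w"
    unfolding args Tfun_summand_def by simp
qed simp

lemma sum_periodic_symmetric_split:
  fixes h :: "int \<Rightarrow> 'a::comm_ring_1"
  assumes periodic: "\<And>k. h (k + 2 * int (q + r)) = h k"
  shows "(\<Sum>j=1..q+r+q. h (2 * int j - int (q+r+q) - 1))
       = (\<Sum>j=1..r. h (2 * int j - int r - 1)) + 2 * (\<Sum>j=1..q. h (2 * int j + int r - 1))"
    (is "_ = ?Y + 2 * ?X")
proof -
  let ?f = "\<lambda>j. h (2 * int j - int (q+r+q) - 1)"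
  have shift_interval: "sum ?f {k+1..k+n} = (\<Sum>j=1..n. ?f (j + k))" for k n
    using sum.shift_bounds_cl_nat_ivl[of ?f 1 k n] by (simp only: add.commute)
  have "sum ?f {1..q+r+q} = sum ?f {1..q} + sum ?f {q+1..q+r} + sum ?f {q+r+1..q+r+q}"
    using sum.ub_add_nat[of 1 q ?f "r+q"] sum.ub_add_nat[of "q+1" "q+r" ?f q]
    by (simp add: add.assoc)
  also have "sum ?f {1..q} = ?X"
  proof (rule sum.cong)
    show "?f j = h (2 * int j + int r - 1)" for j
      using periodic[of "2 * int j - int (q+r+q) - 1"] by (simp add: algebra_simps)
  qed simp
  also have "sum ?f {q+1..q+r} = ?Y"
    unfolding shift_interval by (rule sum.cong) (simp_all add: algebra_simps)
  also have "sum ?f {q+r+1..q+r+q} = ?X"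
    unfolding shift_interval by (rule sum.cong) (simp_all add: algebra_simps)
  finally show ?thesis
    by (simp only: mult_2 add_ac)
qed

lemma Tfun_fusion_relation:
  assumes period: "\<theta> * real p = pi * real z" and "q \<le> p"
  shows "Tfun \<theta> N u m \<omega> (p + q) v
       = Tfun \<theta> N u m \<omega> (p - q) v
         + 2 * (-1) ^ (m * z) * Tfun \<theta> N u m \<omega> q (v + \<i> * of_nat p)"
proof -
  obtain r where p: "p = q + r"
    using \<open>q \<le> p\<close> le_Suc_ex by blast
  let ?Q = "Qfun \<theta> m \<omega>" and ?e = "(-1 :: complex) ^ (m * z)"
  define h where "h k = Tfun_summand \<theta> N u m \<omega> (v + \<i> * of_int k)" for k
  define A where "A = ?Q (v + \<i> * of_nat (q+r+q))"
  define B where "B = ?Q (v + \<i> * of_nat r)"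
  have h_periodic: "h (k + 2 * int (q + r)) = h k" for k
  proof -
    have "v + \<i> * of_int (k + 2 * int (q + r)) = (v + \<i> * of_int k) + 2 * \<i> * of_nat p"
      by (simp add: p algebra_simps)
    then show ?thesis
      unfolding h_def by (simp only: Tfun_summand_periodic[OF period])
  qed
  have Q_reflect: "?Q x = ?e * ?Q (x + 2 * \<i> * of_nat p)" for x
    by (simp add: Qfun_quasi_periodic[OF period])
  have "Tfun \<theta> N u m \<omega> (p + q) v = ?e * A * B * (\<Sum>j=1..q+r+q. h (2 * int j - int (q+r+q) - 1))"
    unfolding Tfun_eq_Qfun_mult_sum Q_reflect[of "v - _"]
    by (simp add: A_def B_def h_def p algebra_simps)
  moreover have "Tfun \<theta> N u m \<omega> (p - q) v = ?e * A * B * (\<Sum>j=1..r. h (2 * int j - int r - 1))"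
    unfolding Tfun_eq_Qfun_mult_sum Q_reflect[of "v - _"]
    by (simp add: A_def B_def h_def p algebra_simps)
  moreover have "Tfun \<theta> N u m \<omega> q (v + \<i> * of_nat p) = A * B * (\<Sum>j=1..q. h (2 * int j + int r - 1))"
    unfolding Tfun_eq_Qfun_mult_sum
    by (simp add: A_def B_def h_def p algebra_simps)
  ultimately show ?thesis
    using sum_periodic_symmetric_split[of h q r, OF h_periodic] by (simp add: algebra_simps)
qed

theorem mainTheorem2:
  fixes p0 :: real and \<alpha> :: nat and \<nu> :: "nat \<Rightarrow> nat"
    and N m :: nat and u :: complex and \<omega> :: "nat \<Rightarrow> complex"
  assumes "p0 \<in> \<rat>" and "p0 > 2"
    and "\<alpha> \<ge> 1" and "\<forall>j\<in>{1..\<alpha>}. \<nu> j \<ge> 1"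
    and "p0 = cfr \<nu> 1 (\<alpha> - 1)"
    and "even N" and "N > 0"
    and "m \<le> N div 2"
    and "\<forall>j\<in>{1..m}.
           - (((sinh (complex_of_real (pi/p0/2) * (\<omega> j + \<i> * (u + 2)))
               * sinh (complex_of_real (pi/p0/2) * (\<omega> j - \<i> * u)))
              / (sinh (complex_of_real (pi/p0/2) * (\<omega> j - \<i> * (u + 2)))
               * sinh (complex_of_real (pi/p0/2) * (\<omega> j + \<i> * u)))) ^ (N div 2))
           = Qfun (pi/p0) m \<omega> (\<omega> j + 2 * \<i>) / Qfun (pi/p0) m \<omega> (\<omega> j - 2 * \<i>)"
  shows "\<forall>v. (\<forall>k::int. Qfun (pi/p0) m \<omega> (v + \<i> * of_int k) \<noteq> 0) \<longrightarrow>
           Tfun (pi/p0) N u m \<omega> (ts_y \<nu> (\<alpha>+1) + ts_y \<nu> \<alpha>) v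
         = Tfun (pi/p0) N u m \<omega> (ts_y \<nu> (\<alpha>+1) - ts_y \<nu> \<alpha>) v
           + 2 * (-1) ^ (m * ts_z \<nu> (\<alpha>+1))
             * Tfun (pi/p0) N u m \<omega> (ts_y \<nu> \<alpha>) (v + \<i> * of_nat (ts_y \<nu> (\<alpha>+1)))"
proof -
  obtain a where a: "\<alpha> = Suc a"
    using \<open>\<alpha> \<ge> 1\<close> by (cases \<alpha>) auto
  define p where "p = ts_y \<nu> (\<alpha>+1)"
  define q where "q = ts_y \<nu> \<alpha>"
  define z where "z = ts_z \<nu> (\<alpha>+1)"
  have p0: "p0 = real p / real z"
    using assms(4,5) cfr_eq_ts_y_div_ts_z[of a \<nu>] by (simp add: a p_def z_def)
  have "p \<ge> 1"
    using assms(4) ts_y_ge_1[of \<alpha> \<nu>] by (simp add: p_def)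
  with p0 \<open>p0 > 2\<close> have period: "pi / p0 * real p = pi * real z"
    by (auto simp: field_simps)
  have "q \<le> p"
    using assms(4) ts_y_le_ts_y_Suc[of \<nu> a] by (simp add: a p_def q_def)
  show ?thesis
    using Tfun_fusion_relation[OF period \<open>q \<le> p\<close>, of N u m \<omega>]
    unfolding p_def q_def z_def by blast
qed

end
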